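(* Let $d\ge2$ and $i\in\{0,\dots,d-1\}$. Let $(X,\omega)=\#^d_{t_h+it_v}\mathbb{T}^2$ be a $d$-symmetric differential with twist coordinate $[t_h+it_v]\in\mathbb{T}^2_d$. If $(X,\omega)\in\mathscr{C}_{v,i}$, then the vertical foliation of $(X,\omega)$ contains $(i,d)$ maximal cylinders of width $\frac{d}{(i,d)}$ and $(i+1,d)$ maximal cylinders of width $\frac{d}{(i+1,d)}$. If $(X,\omega)$ lies on the boundary leaf $\partial\mathscr{C}_{v,i}=\{t_h\equiv i\bmod d\}$, its vertical foliation contains $(i,d)$ cylinders of width $\frac{d}{(i,d)}$.
   Context: $(a,d)=\gcd(a,d)$ with $(0,d)=d$. $\mathbb{T}^2=\mathbb{C}/(\mathbb{Z}\oplus\mathbb{Z}i)$, $\mathbb{T}^2_d=\mathbb{C}/d(\mathbb{Z}\oplus\mathbb{Z}i)$. $\#^d_v\mathbb{T}^2$ is obtained by taking $d$ copies of $\mathbb{T}^2$, slitting each along the image of $[0,v]$ and gluing one side of the slit on copy $j$ to the opposite side on copy $j+1\bmod d$ (by limits for non-injective segments); $t_h+it_v\mapsto\#^d_{t_h+it_v}\mathbb{T}^2$ gives twist coordinates on $\mathbb{T}^2_d$, which parametrizes the modular fiber $\mathscr{F}^{sym}_d$. The vertical foliation of $\mathbb{T}^2_d$ consists of the $d$ open cylinders $\mathscr{C}_{v,i}=\{[t_h+it_v]:\lfloor t_h\rfloor\equiv i\bmod d,\ t_h\notin\mathbb{Z}\}$, each of width $d$ and height $1$, separated by the vertical leaves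 $\{t_h\equiv i\bmod d\}$. *)

theory Defs
  imports "HOL-Analysis.Analysis"
begin

text \<open>
Concrete model of the d-symmetric differential obtained by the slit construction.
A point of the surface is represented by a pair (z, j): z a complex number
(representing its class in the torus C/(Z + Z i)) and j an integer (the sheet, taken mod d).
Points lying on the slit are attached to one fixed side of the slit (the side reached by the
principal branch of Arg).  The images of the slit endpoints 0 and v are the singular
(marked) points.
\<close>

definition Lat :: "complex set" where
  "Lat = {of_int a + of_int b * \<i> | a b. True}"

definition sing :: "complex \<Rightarrow> complex set" where
  "sing v = {z. z \<in> Lat \<or> z - v \<in> Lat}"

text \<open>Signed number of crossings of the straight segment from z to w with the
  translated slit l + [0, v]: continuous change of the argument of (x - l - v)/(x - l)
  along the segment, minus the change of its principal value, divided by 2 pi.\<close>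
definition cross :: "complex \<Rightarrow> complex \<Rightarrow> complex \<Rightarrow> complex \<Rightarrow> int" where
  "cross v l z w = round ((Arg ((w - l - v) / (z - l - v)) - Arg ((w - l) / (z - l))
      - Arg ((w - l - v) / (w - l)) + Arg ((z - l - v) / (z - l))) / (2 * pi))"

definition shift :: "complex \<Rightarrow> complex \<Rightarrow> complex \<Rightarrow> int" where
  "shift v z w = - (\<Sum>l\<in>{l \<in> Lat. cross v l z w \<noteq> 0}. cross v l z w)"

type_synonym pt = "complex \<times> int"

definition same :: "nat \<Rightarrow> pt \<Rightarrow> pt \<Rightarrow> bool" where
  "same d p q \<longleftrightarrow> fst q - fst p \<in> Lat \<and> snd p mod int d = snd q mod int d"

definition vflow :: "complex \<Rightarrow> pt \<Rightarrow> real \<Rightarrow> pt" where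
  "vflow v p t = (fst p + \<i> * of_real t, snd p + shift v (fst p) (fst p + \<i> * of_real t))"

definition hflow :: "complex \<Rightarrow> pt \<Rightarrow> real \<Rightarrow> pt" where
  "hflow v p s = (fst p + of_real s, snd p + shift v (fst p) (fst p + of_real s))"

definition vperiods :: "complex \<Rightarrow> nat \<Rightarrow> pt \<Rightarrow> real set" where
  "vperiods v d p = {T. T > 0 \<and> closed_segment (fst p) (fst p + \<i> * of_real T) \<inter> sing v = {}
                       \<and> same d (vflow v p T) p}"

definition vperiod :: "complex \<Rightarrow> nat \<Rightarrow> pt \<Rightarrow> real" where
  "vperiod v d p = Inf (vperiods v d p)"

definition regset :: "complex \<Rightarrow> nat \<Rightarrow> pt set" where
  "regset v d = {p. vperiods v d p \<noteq> {}}"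

text \<open>Two regular points lie in the same maximal vertical cylinder iff one is reached from
  the other by a horizontal move staying inside the regular set followed by a vertical move.\<close>
definition cyl_rel :: "complex \<Rightarrow> nat \<Rightarrow> (pt \<times> pt) set" where
  "cyl_rel v d = {(p, q). p \<in> regset v d \<and> q \<in> regset v d \<and>
     (\<exists>s t. t \<ge> 0 \<and>
        closed_segment (fst p) (fst p + of_real s) \<inter> sing v = {} \<and>
        (\<forall>r \<in> {min 0 s..max 0 s}. hflow v p r \<in> regset v d) \<and>
        closed_segment (fst (hflow v p s)) (fst (hflow v p s) + \<i> * of_real t) \<inter> sing v = {} \<and>
        same d q (vflow v (hflow v p s) t))}"

text \<open>Maximal cylinders of the vertical foliation of #^d_v T^2, and their widths
  (circumference = length of the closed core leaves).\<close>
definition cylinders :: "complex \<Rightarrow> nat \<Rightarrow> pt set set" where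
  "cylinders v d = regset v d // cyl_rel v d"

definition cyl_width :: "complex \<Rightarrow> nat \<Rightarrow> pt set \<Rightarrow> real" where
  "cyl_width v d C = vperiod v d (SOME p. p \<in> C)"

definition in_open_cyl :: "nat \<Rightarrow> nat \<Rightarrow> real \<Rightarrow> bool" where
  "in_open_cyl d i th \<longleftrightarrow> \<lfloor>th\<rfloor> mod int d = int i \<and> th \<notin> \<int>"

definition on_boundary_leaf :: "nat \<Rightarrow> nat \<Rightarrow> real \<Rightarrow> bool" where
  "on_boundary_leaf d i th \<longleftrightarrow> (\<exists>k::int. th = real i + of_int k * real d)"

end

theory Submission
  imports Defs
begin

text \<open>
  Crossing the translated slit \<open>l + [0, v]\<close> along a straight segment changes the sheet by the
  increment of a branch of \<open>arg (w - l - v) - arg (w - l)\<close>.  Inside a vertical band of abscissae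
  avoiding \<open>\<int>\<close> and \<open>Re v + \<int>\<close>, one branch serves for all (finitely many relevant) slits at once,
  so the total sheet shift is a cocycle there.  Going once up the closed vertical leaf at a
  regular abscissa \<open>x\<close> shifts the sheet by \<open>k = \<lfloor>x\<rfloor> - \<lfloor>x - Re v\<rfloor>\<close>, which equals
  \<open>\<lfloor>Re v\<rfloor> + 1\<close> or \<open>\<lfloor>Re v\<rfloor>\<close> depending on which band \<open>x\<close> lies in (only the latter
  if \<open>Re v \<in> \<int>\<close>).  Hence the leaf closes after \<open>d / gcd k d\<close> turns, and the cocycle
  provides a sheet label which, taken modulo \<open>gcd k d\<close>, separates the maximal cylinders:
  there are \<open>gcd k d\<close> of them for each value of \<open>k\<close>.
\<close>

lemma Arg_divide_eq_diff:
  assumes "z \<noteq> 0" "w \<noteq> 0" "Arg z - Arg w \<in> {-pi<..pi}"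
  shows "Arg (z / w) = Arg z - Arg w"
  using Arg_divide'[OF assms(1,2)] assms(3) by auto

lemma Arg_divide_cong_diff:
  assumes "z \<noteq> 0" "w \<noteq> 0"
  obtains k :: int where "Arg (z / w) = Arg z - Arg w + 2 * pi * k"
proof
  let ?k = "if Arg z - Arg w > pi then -1 else if Arg z - Arg w \<le> -pi then 1 else 0 :: int"
  show "Arg (z / w) = Arg z - Arg w + 2 * pi * ?k"
    using Arg_divide'[OF assms] by simp
qed

lemma Arg_divide_Re_pos: "Re z > 0 \<Longrightarrow> Re w > 0 \<Longrightarrow> Arg (z / w) = Arg z - Arg w"
  using Arg_Re_pos[of z] Arg_Re_pos[of w] by (intro Arg_divide_eq_diff) auto

lemma Arg_divide_Im_pos: "Im z > 0 \<Longrightarrow> Im w > 0 \<Longrightarrow> Arg (z / w) = Arg z - Arg w"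
  using Arg_lt_pi[of z] Arg_lt_pi[of w] by (intro Arg_divide_eq_diff) auto

lemma Arg_divide_Im_neg: "Im z < 0 \<Longrightarrow> Im w < 0 \<Longrightarrow> Arg (z / w) = Arg z - Arg w"
  using Arg_neg_iff[of z] Arg_neg_iff[of w] mpi_less_Arg[of z] mpi_less_Arg[of w]
  by (intro Arg_divide_eq_diff) auto

lemma Arg_minus_Im_pos: "Im z > 0 \<Longrightarrow> Arg (- z) = Arg z - pi"
  using Arg_minus[of z] Arg_lt_pi[of z] by (cases "z = 0") auto

lemma Arg_minus_Im_neg: "Im z < 0 \<Longrightarrow> Arg (- z) = Arg z + pi"
  using Arg_minus[of z] Arg_neg_iff[of z] by (cases "z = 0") auto

section \<open>Crossing numbers as increments of a potential\<close>

text \<open>On the half-plane \<open>Re (\<zeta> / u) > 0\<close> the function \<open>Arg (\<zeta> / u)\<close> is a continuous branch of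
  the argument; hence for segments staying in the half-planes of \<open>u\<^sub>1\<close> (for \<open>w - l - v\<close>) and
  \<open>u\<^sub>2\<close> (for \<open>w - l\<close>) the crossing numbers are increments of this potential.\<close>

definition slit_potential :: "complex \<Rightarrow> complex \<Rightarrow> complex \<Rightarrow> complex \<Rightarrow> complex \<Rightarrow> real" where
  "slit_potential v l u1 u2 w =
     (Arg ((w - l - v) / u1) - Arg ((w - l) / u2) - Arg ((w - l - v) / (w - l))) / (2 * pi)"

lemma slit_potential_cong:
  assumes "w - l - v \<noteq> 0" "w - l \<noteq> 0" "u1 \<noteq> 0" "u2 \<noteq> 0"
  obtains k :: int where "slit_potential v l u1 u2 w = Arg (u2 / u1) / (2 * pi) + k"
proof -
  define a b where "a = (w - l - v) / u1" and "b = (w - l) / u2"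
  have nz: "a \<noteq> 0" "b \<noteq> 0" "u2 / u1 \<noteq> 0" "a / b \<noteq> 0"
    using assms unfolding a_def b_def by auto
  have "(w - l - v) / (w - l) = (a / b) / (u2 / u1)"
    using assms unfolding a_def b_def by (simp add: field_simps)
  moreover obtain k1 :: int where "Arg ((a / b) / (u2 / u1)) = Arg (a / b) - Arg (u2 / u1) + 2 * pi * k1"
    using Arg_divide_cong_diff[OF nz(4,3)] .
  moreover obtain k2 :: int where "Arg (a / b) = Arg a - Arg b + 2 * pi * k2"
    using Arg_divide_cong_diff[OF nz(1,2)] .
  ultimately have "slit_potential v l u1 u2 w = Arg (u2 / u1) / (2 * pi) + of_int (- k1 - k2)"
    unfolding slit_potential_def a_def b_def by (simp add: field_simps)
  thus ?thesis by (rule that)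
qed

lemma cross_eq_slit_potential_diff:
  assumes "u1 \<noteq> 0" "u2 \<noteq> 0"
    and "Re ((w1 - l - v) / u1) > 0" "Re ((w2 - l - v) / u1) > 0"
    and "Re ((w1 - l) / u2) > 0" "Re ((w2 - l) / u2) > 0"
  shows "of_int (cross v l w1 w2) = slit_potential v l u1 u2 w2 - slit_potential v l u1 u2 w1"
proof -
  have "Arg ((w2 - l - v) / (w1 - l - v)) = Arg ((w2 - l - v) / u1) - Arg ((w1 - l - v) / u1)"
    using Arg_divide_Re_pos[OF assms(4,3)] assms(1) by simp
  moreover have "Arg ((w2 - l) / (w1 - l)) = Arg ((w2 - l) / u2) - Arg ((w1 - l) / u2)"
    using Arg_divide_Re_pos[OF assms(6,5)] assms(2) by simp
  ultimately have "Arg ((w2 - l - v) / (w1 - l - v)) - Arg ((w2 - l) / (w1 - l))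
      - Arg ((w2 - l - v) / (w2 - l)) + Arg ((w1 - l - v) / (w1 - l))
      = (Arg ((w2 - l - v) / u1) - Arg ((w2 - l) / u2) - Arg ((w2 - l - v) / (w2 - l)))
      - (Arg ((w1 - l - v) / u1) - Arg ((w1 - l) / u2) - Arg ((w1 - l - v) / (w1 - l)))"
    by linarith
  then have incr: "(Arg ((w2 - l - v) / (w1 - l - v)) - Arg ((w2 - l) / (w1 - l))
      - Arg ((w2 - l - v) / (w2 - l)) + Arg ((w1 - l - v) / (w1 - l))) / (2 * pi)
      = slit_potential v l u1 u2 w2 - slit_potential v l u1 u2 w1"
    unfolding slit_potential_def diff_divide_distrib[symmetric] by (rule arg_cong)
  have nz: "w1 - l - v \<noteq> 0" "w1 - l \<noteq> 0" "w2 - l - v \<noteq> 0" "w2 - l \<noteq> 0"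
    using assms by auto
  obtain k1 k2 :: int
    where "slit_potential v l u1 u2 w1 = Arg (u2 / u1) / (2 * pi) + k1"
      and "slit_potential v l u1 u2 w2 = Arg (u2 / u1) / (2 * pi) + k2"
    using slit_potential_cong[OF nz(1,2) assms(1,2)] slit_potential_cong[OF nz(3,4) assms(1,2)]
    by metis
  hence "slit_potential v l u1 u2 w2 - slit_potential v l u1 u2 w1 = of_int (k2 - k1)"
    by simp
  thus ?thesis
    unfolding cross_def incr by (simp only: round_of_int)
qed

lemma slit_potential_eq_0:
  assumes "Re ((w - l - v) / u) > 0" "Re ((w - l) / u) > 0"
  shows "slit_potential v l u u w = 0"
proof -
  have "u \<noteq> 0" using assms by auto
  hence quotient: "(w - l - v) / (w - l) = ((w - l - v) / u) / ((w - l) / u)" by simp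
  have "Arg ((w - l - v) / (w - l)) = Arg ((w - l - v) / u) - Arg ((w - l) / u)"
    unfolding quotient by (rule Arg_divide_Re_pos[OF assms])
  thus ?thesis unfolding slit_potential_def by simp
qed

lemma cross_eq_0_half_plane:
  assumes "u \<noteq> 0" "Re ((w1 - l - v) / u) > 0" "Re ((w2 - l - v) / u) > 0"
    "Re ((w1 - l) / u) > 0" "Re ((w2 - l) / u) > 0"
  shows "cross v l w1 w2 = 0"
  using cross_eq_slit_potential_diff[of u u w1 l v w2] slit_potential_eq_0 assms by simp

lemma cross_self: "cross v l z z = 0"
  unfolding cross_def by (simp add: Arg_zero)

lemma cross_translate: "cross v (l + m) (z + m) (w + m) = cross v l z w"
  unfolding cross_def by (simp add: algebra_simps)

lemma Lat_iff: "z \<in> Lat \<longleftrightarrow> Re z \<in> \<int> \<and> Im z \<in> \<int>"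
proof
  assume "Re z \<in> \<int> \<and> Im z \<in> \<int>"
  then obtain a b :: int where "Re z = a" "Im z = b" by (metis Ints_cases)
  hence "z = of_int a + of_int b * \<i>" by (simp add: complex_eq_iff)
  thus "z \<in> Lat" unfolding Lat_def by blast
qed (auto simp: Lat_def)

lemma Lat_add: "l \<in> Lat \<Longrightarrow> m \<in> Lat \<Longrightarrow> l + m \<in> Lat"
  and Lat_diff: "l \<in> Lat \<Longrightarrow> m \<in> Lat \<Longrightarrow> l - m \<in> Lat"
  and Lat_minus_iff: "- l \<in> Lat \<longleftrightarrow> l \<in> Lat"
  by (auto simp: Lat_iff)

definition lattice_box :: "int \<Rightarrow> complex set" where
  "lattice_box N = (\<lambda>(a, b). of_int a + of_int b * \<i>) ` ({-N..N} \<times> {-N..N})"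

lemma finite_lattice_box: "finite (lattice_box N)"
  unfolding lattice_box_def by simp

lemma lattice_box_subset_Lat: "lattice_box N \<subseteq> Lat"
  unfolding lattice_box_def Lat_def by auto

lemma sum_lattice_box:
  "(\<Sum>l\<in>lattice_box N. f l) = (\<Sum>a\<in>{-N..N}. \<Sum>b\<in>{-N..N}. f (of_int a + of_int b * \<i>))"
proof -
  have "inj_on (\<lambda>(a, b). of_int a + of_int b * \<i> :: complex) ({-N..N} \<times> {-N..N})"
    by (auto simp: inj_on_def complex_eq_iff)
  thus ?thesis
    unfolding lattice_box_def by (simp add: sum.reindex sum.cartesian_product split_def)
qed

definition box_radius :: "complex \<Rightarrow> complex \<Rightarrow> complex \<Rightarrow> int" where
  "box_radius v z w = \<lceil>\<bar>Re z\<bar> + \<bar>Re w\<bar> + \<bar>Re v\<bar> + \<bar>Im z\<bar> + \<bar>Im w\<bar> + \<bar>Im v\<bar>\<rceil> + 1"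

text \<open>A translated slit far from the segment lies in a half-plane not meeting it.\<close>

lemma cross_eq_0_outside_box:
  assumes "box_radius v z w \<le> N" "\<not> (\<bar>a\<bar> \<le> N \<and> \<bar>b\<bar> \<le> N)"
  shows "cross v (of_int a + of_int b * \<i>) z w = 0"
proof -
  have bound: "\<bar>Re z\<bar> + \<bar>Re w\<bar> + \<bar>Re v\<bar> + \<bar>Im z\<bar> + \<bar>Im w\<bar> + \<bar>Im v\<bar> + 1 \<le> N"
    using assms(1) unfolding box_radius_def by linarith
  consider "a > N" | "a < -N" | "b > N" | "b < -N" using assms(2) by linarith
  thus ?thesis
  proof cases
    case 1 show ?thesis by (rule cross_eq_0_half_plane[of "-1"]) (use bound 1 in auto)
  next
    case 2 show ?thesis by (rule cross_eq_0_half_plane[of 1]) (use bound 2 in auto)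
  next
    case 3 show ?thesis by (rule cross_eq_0_half_plane[of "-\<i>"]) (use bound 3 in auto)
  next
    case 4 show ?thesis by (rule cross_eq_0_half_plane[of "\<i>"]) (use bound 4 in auto)
  qed
qed

lemma cross_support_subset_lattice_box:
  assumes "box_radius v z w \<le> N"
  shows "{l \<in> Lat. cross v l z w \<noteq> 0} \<subseteq> lattice_box N"
proof
  fix l assume "l \<in> {l \<in> Lat. cross v l z w \<noteq> 0}"
  then obtain a b :: int where l: "l = of_int a + of_int b * \<i>" and "cross v l z w \<noteq> 0"
    unfolding Lat_def by auto
  hence "\<bar>a\<bar> \<le> N \<and> \<bar>b\<bar> \<le> N" using cross_eq_0_outside_box[OF assms] by blast
  thus "l \<in> lattice_box N" unfolding lattice_box_def l by (auto intro!: image_eqI[where x="(a, b)"])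
qed

lemma finite_cross_support: "finite {l \<in> Lat. cross v l z w \<noteq> 0}"
  using cross_support_subset_lattice_box[OF order_refl] finite_lattice_box by (rule finite_subset)

lemma shift_eq_sum:
  assumes "finite T" "T \<subseteq> Lat" "{l \<in> Lat. cross v l z w \<noteq> 0} \<subseteq> T"
  shows "shift v z w = - (\<Sum>l\<in>T. cross v l z w)"
  unfolding shift_def using assms by (auto intro!: sum.mono_neutral_left)

lemma shift_eq_sum_lattice_box:
  assumes "box_radius v z w \<le> N"
  shows "shift v z w = - (\<Sum>l\<in>lattice_box N. cross v l z w)"
  using finite_lattice_box lattice_box_subset_Lat cross_support_subset_lattice_box[OF assms]
  by (rule shift_eq_sum)

lemma shift_self: "shift v z z = 0"
  unfolding shift_def cross_self by simp

lemma shift_translate: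
  assumes "m \<in> Lat"
  shows "shift v (z + m) (w + m) = shift v z w"
proof -
  let ?S = "{l \<in> Lat. cross v l z w \<noteq> 0}"
  have "shift v (z + m) (w + m) = - (\<Sum>l\<in>(\<lambda>l. l + m) ` ?S. cross v l (z + m) (w + m))"
  proof (rule shift_eq_sum)
    show "{l \<in> Lat. cross v l (z + m) (w + m) \<noteq> 0} \<subseteq> (\<lambda>l. l + m) ` ?S"
    proof
      fix l assume "l \<in> {l \<in> Lat. cross v l (z + m) (w + m) \<noteq> 0}"
      hence "l - m \<in> ?S" using cross_translate[of v "l - m" m z w] Lat_diff assms by auto
      thus "l \<in> (\<lambda>l. l + m) ` ?S" by (auto intro!: image_eqI[where x="l - m"])
    qed
  qed (use finite_cross_support Lat_add assms in auto)
  also have "\<dots> = - (\<Sum>l\<in>?S. cross v l z w)"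
    by (simp add: sum.reindex cross_translate)
  finally show ?thesis unfolding shift_def .
qed

section \<open>The shift is a cocycle within a vertical band\<close>

text \<open>For \<open>th = Re v\<close>, the regular abscissae are those of the vertical lines missing the
  singular points \<open>Lat \<union> (v + Lat)\<close>.\<close>

definition regular_abscissa :: "real \<Rightarrow> real \<Rightarrow> bool" where
  "regular_abscissa th x \<longleftrightarrow> x \<notin> \<int> \<and> x - th \<notin> \<int>"

definition regular_band :: "real \<Rightarrow> real \<Rightarrow> real \<Rightarrow> bool" where
  "regular_band th x y \<longleftrightarrow> (\<forall>r \<in> {min x y..max x y}. regular_abscissa th r)"

lemma regular_band_refl: "regular_abscissa th x \<Longrightarrow> regular_band th x x"
  unfolding regular_band_def by simp

lemma regular_band_sym: "regular_band th x y \<longleftrightarrow> regular_band th y x"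
  unfolding regular_band_def by (simp add: min.commute max.commute)

lemma regular_band_regular_abscissa:
  "regular_band th x y \<Longrightarrow> regular_abscissa th x \<and> regular_abscissa th y"
  unfolding regular_band_def by simp

lemma Re_mem_closed_segment:
  assumes "w \<in> closed_segment a b"
  shows "Re w \<in> {min (Re a) (Re b)..max (Re a) (Re b)}"
proof -
  have "Re w \<in> closed_segment (Re a) (Re b)"
    using assms closed_segment_linear_image[of Re a b] bounded_linear.linear[OF bounded_linear_Re] by blast
  thus ?thesis by (auto simp: closed_segment_eq_real_ivl split: if_splits)
qed

lemma closed_segment_Int_sing_empty:
  assumes "regular_band (Re v) (Re a) (Re b)"
  shows "closed_segment a b \<inter> sing v = {}"
proof -
  have "\<not> regular_abscissa (Re v) (Re w)" if "w \<in> sing v" for w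
    using that unfolding sing_def regular_abscissa_def by (auto simp: Lat_iff)
  thus ?thesis using assms Re_mem_closed_segment unfolding regular_band_def by blast
qed

definition side_sign :: "real \<Rightarrow> complex" where
  "side_sign r = (if r > 0 then 1 else -1)"

text \<open>The directions point from the endpoints \<open>l + v\<close> and \<open>l\<close> of a translated slit towards
  the abscissa \<open>x\<^sub>0\<close>; when no endpoint lies between \<open>x\<^sub>0\<close> and \<open>Re w\<close>, both half-planes of the
  potential contain \<open>w\<close>.\<close>

definition band_potential :: "complex \<Rightarrow> real \<Rightarrow> complex \<Rightarrow> complex \<Rightarrow> real" where
  "band_potential v x0 l w =
     slit_potential v l (side_sign (x0 - Re (l + v))) (side_sign (x0 - Re l)) w"

lemma Re_divide_side_sign_pos:
  assumes "Re P \<notin> {min x0 (Re w)..max x0 (Re w)}"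
  shows "Re ((w - P) / side_sign (x0 - Re P)) > 0"
  using assms unfolding side_sign_def by (auto simp: min_def max_def split: if_splits)

lemma cross_eq_band_potential_diff:
  assumes "l \<in> Lat" "regular_band (Re v) x0 (Re w1)" "regular_band (Re v) x0 (Re w2)"
  shows "of_int (cross v l w1 w2) = band_potential v x0 l w2 - band_potential v x0 l w1"
proof -
  have "Re l \<in> \<int>" "Re (l + v) - Re v \<in> \<int>" using assms(1) by (auto simp: Lat_iff)
  hence outside: "Re l \<notin> {min x0 (Re w)..max x0 (Re w)}"
      "Re (l + v) \<notin> {min x0 (Re w)..max x0 (Re w)}"
    if "regular_band (Re v) x0 (Re w)" for w
    using that unfolding regular_band_def regular_abscissa_def by blast+
  have "Re ((w - l - v) / side_sign (x0 - Re (l + v))) > 0"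
      "Re ((w - l) / side_sign (x0 - Re l)) > 0"
    if "regular_band (Re v) x0 (Re w)" for w
    using Re_divide_side_sign_pos[OF outside(2)[OF that]] Re_divide_side_sign_pos[OF outside(1)[OF that]]
    by (simp_all add: diff_diff_add)
  thus ?thesis
    unfolding band_potential_def
    by (intro cross_eq_slit_potential_diff) (use assms in \<open>auto simp: side_sign_def\<close>)
qed

lemma shift_eq_band_potential_diff:
  assumes "regular_band (Re v) x0 (Re w1)" "regular_band (Re v) x0 (Re w2)"
    and "box_radius v w1 w2 \<le> N"
  shows "of_int (shift v w1 w2) = (\<Sum>l\<in>lattice_box N. band_potential v x0 l w1)
                                - (\<Sum>l\<in>lattice_box N. band_potential v x0 l w2)"
proof -
  have "of_int (shift v w1 w2) = - (\<Sum>l\<in>lattice_box N. of_int (cross v l w1 w2) :: real)"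
    using shift_eq_sum_lattice_box[OF assms(3)] by simp
  also have "\<dots> = - (\<Sum>l\<in>lattice_box N. band_potential v x0 l w2 - band_potential v x0 l w1)"
    using cross_eq_band_potential_diff[OF _ assms(1,2)] lattice_box_subset_Lat
    by (intro arg_cong[where f=uminus] sum.cong) auto
  finally show ?thesis by (simp add: sum_subtractf)
qed

lemma shift_cocycle:
  assumes "regular_band (Re v) x0 (Re w1)" "regular_band (Re v) x0 (Re w2)"
    "regular_band (Re v) x0 (Re w3)"
  shows "shift v w1 w3 = shift v w1 w2 + shift v w2 w3"
proof -
  define N where "N = max (box_radius v w1 w3) (max (box_radius v w1 w2) (box_radius v w2 w3))"
  have "real_of_int (shift v w1 w3) = real_of_int (shift v w1 w2 + shift v w2 w3)"
    using shift_eq_band_potential_diff[of v x0 _ _ N] assms unfolding N_def by simp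
  thus ?thesis by linarith
qed

lemma shift_antisym:
  assumes "regular_band (Re v) x0 (Re w1)" "regular_band (Re v) x0 (Re w2)"
  shows "shift v w2 w1 = - shift v w1 w2"
  using shift_cocycle[OF assms(1,2,1)] shift_self by simp

section \<open>Monodromy of the closed vertical leaves\<close>

text \<open>\<open>\<lfloor>x\<rfloor> - \<lfloor>x - th\<rfloor>\<close> counts the integers \<open>a\<close> with \<open>x - th < a \<le> x\<close>, i.e. (for regular \<open>x\<close>)
  the translated slits \<open>a + [0, v]\<close> whose horizontal shadow contains \<open>x\<close>.\<close>

definition monodromy :: "real \<Rightarrow> real \<Rightarrow> int" where
  "monodromy th x = \<lfloor>x\<rfloor> - \<lfloor>x - th\<rfloor>"

lemma band_potential_far_vertical:
  assumes "x \<noteq> a" "x \<noteq> a + Re v" "Y > 0 \<and> Y > Im v \<or> Y < 0 \<and> Y < Im v"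
  shows "band_potential v x (of_real a) (Complex x Y)
           = (if Y > 0 then -1/2 else 1/2) * (of_bool (a < x) - of_bool (a + Re v < x))"
proof -
  define \<alpha> \<beta> where "\<alpha> = Complex x Y - of_real a - v" and "\<beta> = Complex x Y - of_real a"
  have Re: "Re \<alpha> = x - a - Re v" "Re \<beta> = x - a" and Im: "Im \<alpha> = Y - Im v" "Im \<beta> = Y"
    unfolding \<alpha>_def \<beta>_def by auto
  have upper: "Y > 0 \<Longrightarrow> Im \<alpha> > 0 \<and> Im \<beta> > 0" and lower: "\<not> Y > 0 \<Longrightarrow> Im \<alpha> < 0 \<and> Im \<beta> < 0"
    using assms(3) Im by auto
  have pot: "band_potential v x (of_real a) (Complex x Y)
      = (Arg (\<alpha> / side_sign (x - (a + Re v))) - Arg (\<beta> / side_sign (x - a)) - Arg (\<alpha> / \<beta>)) / (2 * pi)"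
    unfolding band_potential_def slit_potential_def \<alpha>_def \<beta>_def by simp
  consider "a < x \<and> x < a + Re v" | "a + Re v < x \<and> x < a"
    | "x > a \<and> x > a + Re v" | "x < a \<and> x < a + Re v"
    using assms(1,2) by linarith
  thus ?thesis
  proof cases
    case 1
    hence "band_potential v x (of_real a) (Complex x Y) = (Arg (- \<alpha>) - Arg \<beta> - Arg (\<alpha> / \<beta>)) / (2 * pi)"
      unfolding pot side_sign_def by simp
    thus ?thesis using 1 upper lower
      by (cases "Y > 0") (simp_all add: Arg_minus_Im_pos Arg_divide_Im_pos Arg_minus_Im_neg Arg_divide_Im_neg)
  next
    case 2
    hence "band_potential v x (of_real a) (Complex x Y) = (Arg \<alpha> - Arg (- \<beta>) - Arg (\<alpha> / \<beta>)) / (2 * pi)"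
      unfolding pot side_sign_def by simp
    thus ?thesis using 2 upper lower
      by (cases "Y > 0") (simp_all add: Arg_minus_Im_pos Arg_divide_Im_pos Arg_minus_Im_neg Arg_divide_Im_neg)
  next
    case 3
    hence "band_potential v x (of_real a) (Complex x Y) = slit_potential v (of_real a) 1 1 (Complex x Y)"
      unfolding band_potential_def side_sign_def by simp
    also have "\<dots> = 0" by (rule slit_potential_eq_0) (use 3 Re in \<open>auto simp: \<alpha>_def \<beta>_def\<close>)
    finally show ?thesis using 3 by simp
  next
    case 4
    hence "band_potential v x (of_real a) (Complex x Y) = slit_potential v (of_real a) (-1) (-1) (Complex x Y)"
      unfolding band_potential_def side_sign_def by simp
    also have "\<dots> = 0" by (rule slit_potential_eq_0) (use 4 Re in \<open>auto simp: \<alpha>_def \<beta>_def\<close>)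
    finally show ?thesis using 4 by simp
  qed
qed

lemma sum_int_telescope:
  fixes F :: "int \<Rightarrow> 'a::ab_group_add"
  assumes "m \<le> n + 1"
  shows "(\<Sum>b\<in>{m..n}. F (b - 1) - F b) = F (m - 1) - F n"
proof -
  have "m - 1 \<le> n" using assms by simp
  thus ?thesis
  proof (induction n rule: int_ge_induct)
    case (step n)
    have "{m..n + 1} = insert (n + 1) {m..n}" using step.hyps by auto
    thus ?case using step.IH by simp
  qed simp
qed

lemma sum_of_bool_le:
  fixes N m :: int
  assumes "- N - 1 \<le> m" "m \<le> N"
  shows "(\<Sum>a\<in>{-N..N}. of_bool (a \<le> m) :: real) = of_int (m + N + 1)"
proof -
  have "{-N..N} \<inter> {a. a \<le> m} = {-N..m}" using assms by auto
  thus ?thesis using assms by simp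
qed

lemma column_cross_sum:
  assumes "regular_abscissa (Re v) x" and N: "\<bar>x\<bar> + \<bar>Re v\<bar> + \<bar>y\<bar> + \<bar>Im v\<bar> + 2 \<le> N"
  shows "(\<Sum>b\<in>{-N..N}. of_int (cross v (of_int a + of_int b * \<i>) (Complex x y) (Complex x y + \<i>)))
           = - (of_bool (of_int a < x) - of_bool (of_int a + Re v < x) :: real)"
proof -
  define F where "F b = band_potential v x (of_int a) (Complex x (y - of_int b))" for b :: int
  have step: "of_int (cross v (of_int a + of_int b * \<i>) (Complex x y) (Complex x y + \<i>)) = F (b - 1) - F b"
    for b :: int
  proof -
    have "Complex x (y - b) + of_int b * \<i> = Complex x y"
      "Complex x (y - b + 1) + of_int b * \<i> = Complex x y + \<i>"
      by (simp_all add: complex_eq_iff)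
    hence "cross v (of_int a + of_int b * \<i>) (Complex x y) (Complex x y + \<i>)
        = cross v (of_int a + of_int b * \<i>) (Complex x (y - b) + of_int b * \<i>)
                                            (Complex x (y - b + 1) + of_int b * \<i>)"
      by simp
    also have "\<dots> = cross v (of_int a) (Complex x (y - b)) (Complex x (y - b + 1))"
      by (rule cross_translate)
    finally show ?thesis
      using cross_eq_band_potential_diff[of "of_int a" v x "Complex x (y - b)" "Complex x (y - b + 1)"]
        regular_band_refl[OF assms(1)]
      by (simp add: Lat_iff F_def algebra_simps)
  qed
  have avoid: "x \<noteq> of_int a" "x \<noteq> of_int a + Re v"
    using assms(1) unfolding regular_abscissa_def by (auto simp flip: diff_eq_eq)
  have "\<bar>y\<bar> \<ge> y" "\<bar>y\<bar> \<ge> - y" "\<bar>Im v\<bar> \<ge> Im v" "\<bar>Im v\<bar> \<ge> - Im v" "\<bar>x\<bar> + \<bar>Re v\<bar> \<ge> 0"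
    by auto
  hence above: "y - of_int (- N - 1) > 0" "y - of_int (- N - 1) > Im v"
    and below: "y - of_int N < 0" "y - of_int N < Im v"
    using N by linarith+
  have "F (- N - 1) = -1/2 * (of_bool (of_int a < x) - of_bool (of_int a + Re v < x))"
    unfolding F_def using band_potential_far_vertical[OF avoid, of "y - of_int (- N - 1)"] above
    by simp
  moreover have "F N = 1/2 * (of_bool (of_int a < x) - of_bool (of_int a + Re v < x))"
    unfolding F_def using band_potential_far_vertical[OF avoid, of "y - of_int N"] below
    by simp
  moreover have "(\<Sum>b\<in>{-N..N}. F (b - 1) - F b) = F (- N - 1) - F N"
    by (rule sum_int_telescope) (use N in linarith)
  ultimately show ?thesis
    unfolding step by (simp add: algebra_simps)
qed

lemma shift_vertical_unit:
  assumes "regular_abscissa (Re v) x"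
  shows "shift v (Complex x y) (Complex x y + \<i>) = monodromy (Re v) x"
proof -
  define z where "z = Complex x y"
  define N where "N = max (box_radius v z (z + \<i>)) (\<lceil>\<bar>x\<bar> + \<bar>Re v\<bar> + \<bar>y\<bar> + \<bar>Im v\<bar>\<rceil> + 2)"
  have N: "box_radius v z (z + \<i>) \<le> N" "\<bar>x\<bar> + \<bar>Re v\<bar> + \<bar>y\<bar> + \<bar>Im v\<bar> + 2 \<le> N"
    unfolding N_def by linarith+
  have floor_iff: "of_int a < x \<longleftrightarrow> a \<le> \<lfloor>x\<rfloor>" "of_int a + Re v < x \<longleftrightarrow> a \<le> \<lfloor>x - Re v\<rfloor>"
    for a :: int
    using assms unfolding regular_abscissa_def le_floor_iff
    by (auto simp flip: diff_eq_eq simp: less_le)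
  have "real_of_int (shift v z (z + \<i>)) = - (\<Sum>l\<in>lattice_box N. real_of_int (cross v l z (z + \<i>)))"
    using shift_eq_sum_lattice_box[OF N(1)] by simp
  also have "\<dots> = (\<Sum>a\<in>{-N..N}. of_bool (a \<le> \<lfloor>x\<rfloor>) - of_bool (a \<le> \<lfloor>x - Re v\<rfloor>))"
    unfolding sum_lattice_box z_def column_cross_sum[OF assms N(2)] floor_iff
    by (simp flip: sum_negf)
  also have "\<dots> = of_int (monodromy (Re v) x)"
    using N(2) unfolding sum_subtractf monodromy_def
    by (subst (1 2) sum_of_bool_le) linarith+
  finally show ?thesis unfolding z_def by linarith
qed

lemma shift_vertical_int:
  assumes "regular_abscissa (Re v) (Re z)"
  shows "shift v z (z + of_int n * \<i>) = n * monodromy (Re v) (Re z)"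
proof -
  have band: "regular_band (Re v) (Re z) (Re w)" if "Re w = Re z" for w
    using regular_band_refl[OF assms] that by simp
  have step: "shift v z (z + of_int (m + 1) * \<i>) = shift v z (z + of_int m * \<i>) + monodromy (Re v) (Re z)"
    for m :: int
  proof -
    have "z + of_int m * \<i> = Complex (Re z) (Im z + m)"
      "z + of_int (m + 1) * \<i> = Complex (Re z) (Im z + m) + \<i>"
      by (simp_all add: complex_eq_iff)
    hence "shift v (z + of_int m * \<i>) (z + of_int (m + 1) * \<i>) = monodromy (Re v) (Re z)"
      using shift_vertical_unit[OF assms] by simp
    thus ?thesis
      using shift_cocycle[of v "Re z" z "z + of_int m * \<i>" "z + of_int (m + 1) * \<i>"] band by simp
  qed
  show ?thesis
  proof (induction n rule: int_induct[where k=0])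
    case base show ?case using shift_self by simp
  next
    case (step1 m) thus ?case using step[of m] by (simp add: algebra_simps)
  next
    case (step2 m) thus ?case using step[of "m - 1"] by (simp add: algebra_simps)
  qed
qed

lemma diff_Ints_iff_frac_eq: "x - y \<in> \<int> \<longleftrightarrow> frac x = frac y"
  using frac_diff_eq frac_diff_zero frac_eq_0_iff by metis

lemma regular_abscissa_iff_frac: "regular_abscissa th x \<longleftrightarrow> frac x \<noteq> 0 \<and> frac x \<noteq> frac th"
  unfolding regular_abscissa_def diff_Ints_iff_frac_eq frac_eq_0_iff by simp

lemma regular_abscissa_add_of_int: "regular_abscissa th (x + of_int m) \<longleftrightarrow> regular_abscissa th x"
  unfolding regular_abscissa_iff_frac by simp

lemma regular_band_imp_same_cell:
  assumes "x \<le> y" "regular_band th x y"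
  shows "\<lfloor>x\<rfloor> = \<lfloor>y\<rfloor> \<and> (frac x < frac th \<longleftrightarrow> frac y < frac th)"
proof -
  have reg: "regular_abscissa th r" if "x \<le> r" "r \<le> y" for r
    using assms that unfolding regular_band_def by auto
  have "\<not> \<lfloor>x\<rfloor> < \<lfloor>y\<rfloor>"
  proof
    assume "\<lfloor>x\<rfloor> < \<lfloor>y\<rfloor>"
    hence "x \<le> of_int \<lfloor>y\<rfloor>" by linarith
    hence "regular_abscissa th (of_int \<lfloor>y\<rfloor>)" using reg of_int_floor_le by blast
    thus False unfolding regular_abscissa_def by simp
  qed
  hence floor_eq: "\<lfloor>x\<rfloor> = \<lfloor>y\<rfloor>" using floor_mono[OF assms(1)] by simp
  have "\<not> (frac x < frac th \<and> frac th \<le> frac y)"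
  proof
    assume "frac x < frac th \<and> frac th \<le> frac y"
    hence "x \<le> of_int \<lfloor>x\<rfloor> + frac th" "of_int \<lfloor>x\<rfloor> + frac th \<le> y"
      using floor_eq unfolding frac_def by linarith+
    hence "regular_abscissa th (of_int \<lfloor>x\<rfloor> + frac th)" using reg by blast
    thus False unfolding regular_abscissa_iff_frac by simp
  qed
  moreover have "frac x \<le> frac y" using assms(1) floor_eq unfolding frac_def by simp
  ultimately show ?thesis using floor_eq by auto
qed

lemma regular_band_iff:
  "regular_band th x y \<longleftrightarrow> regular_abscissa th x \<and> regular_abscissa th y \<and>
     \<lfloor>x\<rfloor> = \<lfloor>y\<rfloor> \<and> (frac x < frac th \<longleftrightarrow> frac y < frac th)"
proof
  assume band: "regular_band th x y"
  show "regular_abscissa th x \<and> regular_abscissa th y \<and>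
      \<lfloor>x\<rfloor> = \<lfloor>y\<rfloor> \<and> (frac x < frac th \<longleftrightarrow> frac y < frac th)"
  proof (cases "x \<le> y")
    case True
    thus ?thesis using regular_band_regular_abscissa[OF band] regular_band_imp_same_cell[OF True band]
      by blast
  next
    case False
    hence "y \<le> x" by simp
    moreover have "regular_band th y x" using band regular_band_sym by blast
    ultimately show ?thesis using regular_band_regular_abscissa[OF band] regular_band_imp_same_cell
      by metis
  qed
next
  assume cell: "regular_abscissa th x \<and> regular_abscissa th y \<and>
      \<lfloor>x\<rfloor> = \<lfloor>y\<rfloor> \<and> (frac x < frac th \<longleftrightarrow> frac y < frac th)"
  define n where "n = \<lfloor>x\<rfloor>"
  have frac_x: "frac x = x - n" and frac_y: "frac y = y - n"
    using cell unfolding n_def frac_def by auto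
  have pos: "0 < frac x" "0 < frac y" and sides: "frac x \<noteq> frac th" "frac y \<noteq> frac th"
    using cell frac_ge_0[of x] frac_ge_0[of y] unfolding regular_abscissa_iff_frac by auto
  show "regular_band th x y"
    unfolding regular_band_def
  proof
    fix r assume r: "r \<in> {min x y..max x y}"
    have "n < r" "r < n + 1"
      using r pos frac_lt_1[of x] frac_lt_1[of y] frac_x frac_y by auto
    hence frac_r: "frac r = r - n" by (simp add: frac_def floor_eq_iff)
    have "frac r \<noteq> frac th"
    proof (cases "frac x < frac th")
      case True
      hence "max x y < n + frac th" using cell frac_x frac_y by auto
      thus ?thesis using r frac_r by auto
    next
      case False
      hence "min x y > n + frac th" using cell sides frac_x frac_y by auto
      thus ?thesis using r frac_r by auto
    qed
    thus "regular_abscissa th r" unfolding regular_abscissa_iff_frac using \<open>n < r\<close> frac_r by simp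
  qed
qed

lemma monodromy_eq_frac:
  assumes "regular_abscissa th x"
  shows "monodromy th x = \<lfloor>th\<rfloor> + of_bool (frac x < frac th)"
proof -
  have decomp: "x - th = of_int (\<lfloor>x\<rfloor> - \<lfloor>th\<rfloor>) + (frac x - frac th)" unfolding frac_def by simp
  have bounds: "0 \<le> frac x" "frac x < 1" "0 \<le> frac th" "frac th < 1" by (auto simp: frac_lt_1)
  have "\<lfloor>x - th\<rfloor> = \<lfloor>x\<rfloor> - \<lfloor>th\<rfloor> - of_bool (frac x < frac th)"
  proof (cases "frac x < frac th")
    case True
    thus ?thesis unfolding floor_eq_iff using decomp bounds by simp linarith
  next
    case False
    thus ?thesis unfolding floor_eq_iff using decomp bounds by simp linarith
  qed
  thus ?thesis unfolding monodromy_def by simp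
qed

lemma monodromy_add_of_int: "monodromy th (x + of_int m) = monodromy th x"
proof -
  have "\<lfloor>x + of_int m - th\<rfloor> = \<lfloor>x - th\<rfloor> + m"
    using floor_add_int[of "x - th" m] by (simp add: algebra_simps)
  thus ?thesis unfolding monodromy_def by simp
qed

lemma monodromy_eq_if_regular_band:
  assumes "regular_band th x y"
  shows "monodromy th x = monodromy th y"
  using assms monodromy_eq_frac[of th x] monodromy_eq_frac[of th y] unfolding regular_band_iff
  by simp

text \<open>The midpoint of the interval of regular abscissae containing \<open>x\<close>: a base point depending
  only on the band.\<close>

definition band_midpoint :: "real \<Rightarrow> real \<Rightarrow> real" where
  "band_midpoint th x =
     of_int \<lfloor>x\<rfloor> + (if frac x < frac th then frac th / 2 else (1 + frac th) / 2)"

lemma regular_band_band_midpoint: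
  assumes "regular_abscissa th x"
  shows "regular_band th (band_midpoint th x) x"
proof -
  define off where "off = (if frac x < frac th then frac th / 2 else (1 + frac th) / 2)"
  have off: "0 < off \<and> off < 1 \<and> off \<noteq> frac th \<and> (off < frac th \<longleftrightarrow> frac x < frac th)"
  proof -
    define a b where "a = frac x" and "b = frac th"
    have "a \<noteq> 0" "a \<noteq> b" "0 \<le> a" "a < 1" "0 \<le> b" "b < 1"
      using assms unfolding a_def b_def regular_abscissa_iff_frac by (auto simp: frac_lt_1)
    thus ?thesis unfolding off_def a_def[symmetric] b_def[symmetric] by (cases "a < b") auto
  qed
  have floor_mid: "\<lfloor>band_midpoint th x\<rfloor> = \<lfloor>x\<rfloor>"
    unfolding band_midpoint_def off_def[symmetric] using off by (simp add: floor_eq_iff)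
  hence "frac (band_midpoint th x) = off"
    unfolding frac_def band_midpoint_def off_def by simp
  thus ?thesis
    unfolding regular_band_iff regular_abscissa_iff_frac using assms floor_mid off
    by (simp add: regular_abscissa_iff_frac)
qed

lemma band_midpoint_eq_if_regular_band:
  "regular_band th x y \<Longrightarrow> band_midpoint th x = band_midpoint th y"
  unfolding regular_band_iff band_midpoint_def by simp

lemma band_midpoint_add_of_int: "band_midpoint th (x + of_int m) = band_midpoint th x + of_int m"
  unfolding band_midpoint_def by simp

text \<open>The sheet index of \<open>p\<close> transported along a straight segment to the base point of its band
  on the real axis.  By the cocycle property it is unchanged by horizontal and vertical moves
  inside the band.\<close>

definition transported_sheet :: "complex \<Rightarrow> pt \<Rightarrow> int" where
  "transported_sheet v p = snd p + shift v (fst p) (of_real (band_midpoint (Re v) (Re (fst p))))"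

lemma shift_via_band_midpoint:
  assumes "regular_band (Re v) (Re z) (Re w)"
  shows "shift v z (of_real (band_midpoint (Re v) (Re z)))
           = shift v z w + shift v w (of_real (band_midpoint (Re v) (Re w)))"
proof -
  let ?c = "band_midpoint (Re v) (Re z)"
  have mid_eq: "band_midpoint (Re v) (Re w) = ?c"
    using band_midpoint_eq_if_regular_band[OF assms] by simp
  have reg: "regular_abscissa (Re v) (Re z)" "regular_abscissa (Re v) (Re w)"
    using regular_band_regular_abscissa[OF assms] by auto
  have "regular_band (Re v) ?c (Re z)" "regular_band (Re v) ?c (Re w)"
    using regular_band_band_midpoint[OF reg(1)] regular_band_band_midpoint[OF reg(2)] mid_eq by auto
  moreover have "regular_band (Re v) ?c (Re (of_real ?c))"
    using regular_band_band_midpoint[OF reg(1)] regular_band_regular_abscissa regular_band_refl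
    by fastforce
  ultimately show ?thesis using shift_cocycle mid_eq by metis
qed

lemma transported_sheet_vflow:
  assumes "regular_abscissa (Re v) (Re (fst p))"
  shows "transported_sheet v (vflow v p t) = transported_sheet v p"
  using shift_via_band_midpoint[of v "fst p" "fst p + \<i> * of_real t"] regular_band_refl[OF assms]
  unfolding transported_sheet_def vflow_def by simp

lemma transported_sheet_hflow:
  assumes "regular_band (Re v) (Re (fst p)) (Re (fst p) + s)"
  shows "transported_sheet v (hflow v p s) = transported_sheet v p"
  using shift_via_band_midpoint[of v "fst p" "fst p + of_real s"] assms
  unfolding transported_sheet_def hflow_def by simp

lemma transported_sheet_lattice_translate:
  assumes "regular_abscissa (Re v) (Re z)"
  shows "transported_sheet v (z + of_int a + of_int b * \<i>, j)
           = transported_sheet v (z, j) - b * monodromy (Re v) (Re z)"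
proof -
  let ?c = "band_midpoint (Re v) (Re z)"
  have "shift v (z + of_int a + of_int b * \<i>) (of_real (band_midpoint (Re v) (Re z + of_int a)))
      = shift v ((z + of_int b * \<i>) + of_int a) (of_real ?c + of_int a)"
    by (simp add: band_midpoint_add_of_int algebra_simps)
  also have "\<dots> = shift v (z + of_int b * \<i>) (of_real ?c)"
    by (rule shift_translate) (simp add: Lat_iff)
  also have "\<dots> = shift v (z + of_int b * \<i>) z + shift v z (of_real ?c)"
    using shift_via_band_midpoint[of v "z + of_int b * \<i>" z] regular_band_refl[OF assms] by simp
  also have "shift v (z + of_int b * \<i>) z = - (b * monodromy (Re v) (Re z))"
    using shift_antisym[of v "Re z" z "z + of_int b * \<i>"] shift_vertical_int[OF assms]
      regular_band_refl[OF assms] by simp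
  finally show ?thesis unfolding transported_sheet_def by simp
qed

lemma transported_sheet_cong_if_same:
  assumes "regular_abscissa (Re v) (Re (fst p))" "same d q p"
  shows "gcd (monodromy (Re v) (Re (fst p))) (int d) dvd transported_sheet v q - transported_sheet v p"
proof -
  let ?k = "monodromy (Re v) (Re (fst p))"
  have "fst q - fst p \<in> Lat"
    using assms(2) Lat_minus_iff[of "fst p - fst q"] unfolding same_def by simp
  then obtain a b :: int where "fst q - fst p = of_int a + of_int b * \<i>"
    unfolding Lat_def by auto
  hence "q = (fst p + of_int a + of_int b * \<i>, snd q)"
    by (simp add: prod_eq_iff algebra_simps)
  hence "transported_sheet v q = transported_sheet v (fst p + of_int a + of_int b * \<i>, snd q)"
    by (rule arg_cong)
  also have "\<dots> = transported_sheet v (fst p, snd q) - b * ?k"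
    by (rule transported_sheet_lattice_translate[OF assms(1)])
  finally have "transported_sheet v q - transported_sheet v p = (snd q - snd p) - b * ?k"
    unfolding transported_sheet_def by simp
  moreover have "gcd ?k (int d) dvd snd q - snd p"
    using assms(2) unfolding same_def by (metis gcd_dvd2 dvd_trans mod_eq_dvd_iff)
  ultimately show ?thesis by simp
qed

lemma Ints_if_same_vflow:
  assumes "same d (vflow v p T) p"
  shows "T \<in> \<int>"
proof -
  have "- (\<i> * of_real T) \<in> Lat" using assms unfolding same_def vflow_def by simp
  thus ?thesis by (simp add: Lat_iff)
qed

lemma same_vflow_iff:
  assumes "regular_abscissa (Re v) (Re (fst p))"
  shows "same d (vflow v p T) p \<longleftrightarrow>
           (\<exists>n::int. T = of_int n \<and> int d dvd n * monodromy (Re v) (Re (fst p)))"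
proof -
  have "same d (vflow v p (of_int n)) p \<longleftrightarrow> int d dvd n * monodromy (Re v) (Re (fst p))"
    for n :: int
  proof -
    have "shift v (fst p) (fst p + \<i> * of_int n) = n * monodromy (Re v) (Re (fst p))"
      using shift_vertical_int[OF assms, of n] by (simp add: mult.commute)
    moreover have "- (\<i> * of_int n) \<in> Lat" by (simp add: Lat_iff)
    ultimately show ?thesis
      unfolding same_def vflow_def by (auto simp: mod_eq_dvd_iff)
  qed
  thus ?thesis using Ints_if_same_vflow by (metis Ints_cases)
qed

lemma vertical_segment_Int_sing_empty:
  assumes "regular_abscissa (Re v) (Re z)"
  shows "closed_segment z (z + \<i> * of_real T) \<inter> sing v = {}"
  using closed_segment_Int_sing_empty regular_band_refl[OF assms] by simp

lemma vertical_segment_meets_sing: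
  assumes "\<not> regular_abscissa (Re v) (Re z)" "T \<ge> 1"
  shows "closed_segment z (z + \<i> * of_real T) \<inter> sing v \<noteq> {}"
proof -
  obtain w where w: "w \<in> sing v" "Re w = Re z" "Im z \<le> Im w" "Im w \<le> Im z + 1"
  proof (cases "Re z \<in> \<int>")
    case True
    let ?w = "Complex (Re z) (of_int \<lceil>Im z\<rceil>)"
    have "?w \<in> sing v" using True by (simp add: sing_def Lat_iff)
    moreover have "Im z \<le> Im ?w" "Im ?w \<le> Im z + 1"
      using le_of_int_ceiling[of "Im z"] of_int_ceiling_le_add_one[of "Im z"] by simp_all
    ultimately show thesis using that[of ?w] by simp
  next
    case False
    hence "Re z - Re v \<in> \<int>" using assms(1) unfolding regular_abscissa_def by blast
    let ?w = "Complex (Re z) (Im v + of_int \<lceil>Im z - Im v\<rceil>)"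
    have "?w \<in> sing v" using \<open>Re z - Re v \<in> \<int>\<close> by (simp add: sing_def Lat_iff)
    moreover have "Im z \<le> Im ?w" "Im ?w \<le> Im z + 1"
      using le_of_int_ceiling[of "Im z - Im v"] of_int_ceiling_le_add_one[of "Im z - Im v"]
      unfolding complex.sel by linarith+
    ultimately show thesis using that[of ?w] by simp
  qed
  have "w \<in> closed_segment z (z + \<i> * of_real T)"
    using w assms(2) by (simp add: closed_segment_same_Re closed_segment_eq_real_ivl)
  thus ?thesis using w(1) by blast
qed

lemma mem_vperiods_iff:
  assumes "regular_abscissa (Re v) (Re (fst p))"
  shows "T \<in> vperiods v d p \<longleftrightarrow>
           (\<exists>n::int. n > 0 \<and> T = of_int n \<and> int d dvd n * monodromy (Re v) (Re (fst p)))"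
  unfolding vperiods_def same_vflow_iff[OF assms]
  using vertical_segment_Int_sing_empty[OF assms] by auto

lemma mem_regset_iff:
  assumes "d \<ge> 1"
  shows "p \<in> regset v d \<longleftrightarrow> regular_abscissa (Re v) (Re (fst p))"
proof
  assume "p \<in> regset v d"
  then obtain T where T: "T > 0" "closed_segment (fst p) (fst p + \<i> * of_real T) \<inter> sing v = {}"
    "same d (vflow v p T) p"
    unfolding regset_def vperiods_def by auto
  obtain n :: int where "T = of_int n" using Ints_if_same_vflow[OF T(3)] by (elim Ints_cases)
  hence "T \<ge> 1" using T(1) by simp
  thus "regular_abscissa (Re v) (Re (fst p))" using vertical_segment_meets_sing T(2) by blast
next
  assume "regular_abscissa (Re v) (Re (fst p))"
  hence "real d \<in> vperiods v d p"
    using assms by (subst mem_vperiods_iff) (auto intro!: exI[of _ "int d"])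
  thus "p \<in> regset v d" unfolding regset_def by blast
qed

lemma dvd_mult_iff_div_gcd_dvd:
  fixes d k n :: int
  assumes "d \<noteq> 0"
  shows "d dvd n * k \<longleftrightarrow> d div gcd k d dvd n"
proof -
  define g where "g = gcd k d"
  define d' k' where "d' = d div g" and "k' = k div g"
  have "g \<noteq> 0" using assms unfolding g_def by simp
  have d': "d = g * d'" and k': "k = g * k'" unfolding d'_def k'_def g_def by simp_all
  have "coprime d' k'"
    using div_gcd_coprime[of d k] assms unfolding d'_def k'_def g_def by (simp add: gcd.commute)
  have "d dvd n * k \<longleftrightarrow> d' dvd n * k'"
    using \<open>g \<noteq> 0\<close> unfolding d' k' by (simp add: ac_simps)
  also have "\<dots> \<longleftrightarrow> d' dvd n" using \<open>coprime d' k'\<close> by (simp add: coprime_dvd_mult_left_iff)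
  finally show ?thesis unfolding d'_def g_def .
qed

lemma vperiod_eq:
  assumes "d \<ge> 1" "regular_abscissa (Re v) (Re (fst p))"
  shows "vperiod v d p = real d / real_of_int (gcd (monodromy (Re v) (Re (fst p))) (int d))"
proof -
  define g where "g = gcd (monodromy (Re v) (Re (fst p))) (int d)"
  define d' where "d' = int d div g"
  have "g dvd int d" "g > 0" using assms(1) unfolding g_def by auto
  hence "int d = g * d'" unfolding d'_def by simp
  hence "0 < g * d'" using assms(1) by linarith
  hence "d' > 0" using \<open>g > 0\<close> zero_less_mult_pos by blast
  have "int d dvd n * monodromy (Re v) (Re (fst p)) \<longleftrightarrow> d' dvd n" for n
    using dvd_mult_iff_div_gcd_dvd[of "int d" n] assms(1) unfolding d'_def g_def by simp
  hence periods: "T \<in> vperiods v d p \<longleftrightarrow> (\<exists>n::int. n > 0 \<and> T = of_int n \<and> d' dvd n)" for T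
    unfolding mem_vperiods_iff[OF assms(2)] by simp
  have "vperiod v d p = real_of_int d'"
    unfolding vperiod_def
  proof (rule cInf_eq_minimum)
    show "real_of_int d' \<in> vperiods v d p" using \<open>d' > 0\<close> unfolding periods by auto
    show "real_of_int d' \<le> T" if T: "T \<in> vperiods v d p" for T
    proof -
      obtain n where "n > 0" "T = of_int n" "d' dvd n" using T unfolding periods by blast
      thus ?thesis using zdvd_imp_le by simp
    qed
  qed
  also have "\<dots> = real d / real_of_int g"
    unfolding d'_def using of_int_div[OF \<open>g dvd int d\<close>] by simp
  finally show ?thesis unfolding g_def .
qed

lemma exists_ge_dvd_add_mult:
  fixes k E M :: int
  assumes "d \<ge> 1" "gcd k (int d) dvd E"
  obtains n where "n \<ge> M" "int d dvd E + n * k"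
proof -
  obtain u w where uw: "u * k + w * int d = gcd k (int d)" using bezout_int by blast
  obtain e where e: "E = gcd k (int d) * e" using assms(2) unfolding dvd_def by blast
  define c where "c = \<bar>M\<bar> + \<bar>e * u\<bar>"
  have "c \<le> c * int d" using mult_left_mono[of 1 "int d" c] assms(1) unfolding c_def by simp
  hence ge: "- (e * u) + c * int d \<ge> M" using c_def abs_ge_self[of M] abs_ge_self[of "e * u"] by linarith
  have "E + (- (e * u) + c * int d) * k = int d * (e * w + c * k)"
    unfolding e uw[symmetric] by (simp add: algebra_simps)
  hence "int d dvd E + (- (e * u) + c * int d) * k" by (rule dvdI)
  with ge show ?thesis by (rule that)
qed

section \<open>Maximal cylinders\<close>

text \<open>The maximal cylinders turn out to be exactly the classes of this label.\<close>

definition cylinder_label :: "complex \<Rightarrow> nat \<Rightarrow> pt \<Rightarrow> int \<times> int" where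
  "cylinder_label v d p =
     (monodromy (Re v) (Re (fst p)),
      transported_sheet v p mod gcd (monodromy (Re v) (Re (fst p))) (int d))"

definition labelled_cylinder :: "complex \<Rightarrow> nat \<Rightarrow> int \<times> int \<Rightarrow> pt set" where
  "labelled_cylinder v d lab = {q \<in> regset v d. cylinder_label v d q = lab}"

lemma regular_band_if_hflow_in_regset:
  assumes "d \<ge> 1" "\<forall>r \<in> {min 0 s..max 0 s}. hflow v p r \<in> regset v d"
  shows "regular_band (Re v) (Re (fst p)) (Re (fst p) + s)"
  unfolding regular_band_def
proof
  fix r assume "r \<in> {min (Re (fst p)) (Re (fst p) + s)..max (Re (fst p)) (Re (fst p) + s)}"
  hence "r - Re (fst p) \<in> {min 0 s..max 0 s}" by (auto simp: min_def max_def)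
  hence "hflow v p (r - Re (fst p)) \<in> regset v d" using assms(2) by blast
  thus "regular_abscissa (Re v) r" using mem_regset_iff[OF assms(1)] by (simp add: hflow_def)
qed

lemma cyl_rel_imp_same_label:
  assumes "d \<ge> 1" "(p, q) \<in> cyl_rel v d"
  shows "cylinder_label v d q = cylinder_label v d p"
proof -
  obtain s t where p: "p \<in> regset v d" and hflow: "\<forall>r \<in> {min 0 s..max 0 s}. hflow v p r \<in> regset v d"
    and same: "same d q (vflow v (hflow v p s) t)"
    using assms(2) unfolding cyl_rel_def by blast
  define x where "x = Re (fst p)"
  define p' where "p' = vflow v (hflow v p s) t"
  have band: "regular_band (Re v) x (x + s)"
    unfolding x_def by (rule regular_band_if_hflow_in_regset[OF assms(1) hflow])
  have Re_p': "Re (fst p') = x + s" unfolding p'_def vflow_def hflow_def x_def by simp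
  have reg_p': "regular_abscissa (Re v) (Re (fst p'))"
    using regular_band_regular_abscissa[OF band] Re_p' by simp
  have sheet_p': "transported_sheet v p' = transported_sheet v p"
    using transported_sheet_vflow[of v "hflow v p s" t] transported_sheet_hflow[of v p s] band reg_p'
    unfolding p'_def x_def by (simp add: vflow_def)
  have mono_p': "monodromy (Re v) (Re (fst p')) = monodromy (Re v) x"
    using monodromy_eq_if_regular_band[OF band] Re_p' by simp
  have "Re (fst p') - Re (fst q) \<in> \<int>"
    using same unfolding same_def p'_def by (simp add: Lat_iff)
  then obtain m where "Re (fst p') - Re (fst q) = of_int m" by (elim Ints_cases)
  hence "Re (fst q) = Re (fst p') + of_int (- m)" by simp
  hence mono_q: "monodromy (Re v) (Re (fst q)) = monodromy (Re v) x"
    using mono_p' monodromy_add_of_int[of "Re v" "Re (fst p')" "- m"] by simp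
  have "gcd (monodromy (Re v) x) (int d) dvd transported_sheet v q - transported_sheet v p"
    using transported_sheet_cong_if_same[OF reg_p', of d q] same mono_p' sheet_p'
    unfolding p'_def by simp
  thus ?thesis
    unfolding cylinder_label_def mono_q x_def by (simp add: mod_eq_dvd_iff dvd_diff_commute)
qed

lemma regular_band_to_integer_translate:
  assumes "regular_abscissa th x" "regular_abscissa th y" "monodromy th x = monodromy th y"
  shows "regular_band th x (y + of_int (\<lfloor>x\<rfloor> - \<lfloor>y\<rfloor>))"
proof -
  define m where "m = \<lfloor>x\<rfloor> - \<lfloor>y\<rfloor>"
  have "\<lfloor>y + of_int m\<rfloor> = \<lfloor>y\<rfloor> + m" "frac (y + of_int m) = frac y" by simp_all
  hence "\<lfloor>y + of_int m\<rfloor> = \<lfloor>x\<rfloor>" "frac (y + of_int m) = frac y" unfolding m_def by simp_all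
  moreover have "(frac x < frac th) = (frac y < frac th)"
    using assms monodromy_eq_frac by fastforce
  ultimately show ?thesis
    unfolding regular_band_iff m_def[symmetric] regular_abscissa_add_of_int using assms(1,2) by simp
qed

lemma cyl_rel_intro:
  assumes "d \<ge> 1" "p \<in> regset v d" "q \<in> regset v d"
    and band: "regular_band (Re v) (Re (fst p)) (Re (fst p) + s)"
    and "t \<ge> 0" "same d q (vflow v (hflow v p s) t)"
  shows "(p, q) \<in> cyl_rel v d"
proof -
  have "closed_segment (fst p) (fst p + of_real s) \<inter> sing v = {}"
    using closed_segment_Int_sing_empty band by simp
  moreover have "\<forall>r \<in> {min 0 s..max 0 s}. hflow v p r \<in> regset v d"
    using band unfolding regular_band_def mem_regset_iff[OF assms(1)]
    by (auto simp: hflow_def min_def max_def)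
  moreover have "closed_segment (fst (hflow v p s)) (fst (hflow v p s) + \<i> * of_real t) \<inter> sing v = {}"
    using vertical_segment_Int_sing_empty regular_band_regular_abscissa[OF band]
    by (simp add: hflow_def)
  ultimately show ?thesis unfolding cyl_rel_def using assms by blast
qed

text \<open>Move horizontally inside the band to the integer translate of the abscissa of \<open>q\<close>, then
  vertically by enough turns that, by Bezout, the sheet agrees with that of \<open>q\<close> modulo \<open>d\<close>.\<close>

lemma same_label_imp_cyl_rel:
  assumes d: "d \<ge> 1" and p: "p \<in> regset v d" and q: "q \<in> regset v d"
    and label: "cylinder_label v d q = cylinder_label v d p"
  shows "(p, q) \<in> cyl_rel v d"
proof -
  define x x' where "x = Re (fst p)" and "x' = Re (fst q)"
  define k where "k = monodromy (Re v) x"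
  have reg: "regular_abscissa (Re v) x" "regular_abscissa (Re v) x'"
    using p q mem_regset_iff[OF d] unfolding x_def x'_def by auto
  have mono_q: "monodromy (Re v) x' = k" and
    "transported_sheet v q mod gcd k (int d) = transported_sheet v p mod gcd k (int d)"
    using label unfolding cylinder_label_def k_def x_def x'_def by auto
  hence "gcd k (int d) dvd transported_sheet v p - transported_sheet v q"
    by (simp add: mod_eq_dvd_iff dvd_diff_commute)
  then obtain n where n: "n \<ge> \<lceil>Im (fst p) - Im (fst q)\<rceil>"
    and dvd: "int d dvd transported_sheet v p - transported_sheet v q + n * k"
    using exists_ge_dvd_add_mult[OF d] by metis
  define a where "a = \<lfloor>x\<rfloor> - \<lfloor>x'\<rfloor>"
  define s t where "s = x' + of_int a - x" and "t = Im (fst q) - Im (fst p) + of_int n"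
  define p' where "p' = vflow v (hflow v p s) t"
  have band: "regular_band (Re v) x (x + s)"
    using regular_band_to_integer_translate[OF reg] mono_q unfolding k_def s_def a_def by simp
  have fst_p': "fst p' = fst q + of_int a + of_int n * \<i>"
    unfolding p'_def vflow_def hflow_def s_def t_def x_def x'_def by (simp add: complex_eq_iff)
  have reg_p': "regular_abscissa (Re v) (Re (fst p'))" and mono_p': "monodromy (Re v) (Re (fst p')) = k"
    using reg(2) mono_q monodromy_add_of_int[of "Re v" x' a] regular_abscissa_add_of_int[of "Re v" x' a]
    unfolding fst_p' x'_def by simp_all
  have "transported_sheet v p' = transported_sheet v p"
    using transported_sheet_vflow[of v "hflow v p s" t] transported_sheet_hflow[of v p s] band reg_p'
    unfolding p'_def x_def by (simp add: vflow_def)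
  moreover have "transported_sheet v q = transported_sheet v (fst p', snd q) + n * k"
    using transported_sheet_lattice_translate[OF reg_p', of "- a" "- n" "snd q"] mono_p' fst_p'
    by (simp add: algebra_simps)
  ultimately have "snd p' - snd q = transported_sheet v p - transported_sheet v q + n * k"
    unfolding transported_sheet_def by simp
  hence "int d dvd snd q - snd p'" using dvd by (simp add: dvd_diff_commute[of _ "snd q"])
  hence "same d q p'"
    using fst_p' unfolding same_def by (simp add: Lat_iff mod_eq_dvd_iff)
  moreover have "t \<ge> 0" using n unfolding t_def by linarith
  ultimately show ?thesis
    using cyl_rel_intro[OF d p q] band unfolding p'_def x_def by blast
qed

lemma cyl_rel_Image_eq:
  assumes "d \<ge> 1" "p \<in> regset v d"
  shows "cyl_rel v d `` {p} = labelled_cylinder v d (cylinder_label v d p)"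
proof (intro set_eqI iffI)
  fix q assume "q \<in> cyl_rel v d `` {p}"
  hence "(p, q) \<in> cyl_rel v d" by simp
  moreover from this have "q \<in> regset v d" by (simp add: cyl_rel_def)
  ultimately show "q \<in> labelled_cylinder v d (cylinder_label v d p)"
    using cyl_rel_imp_same_label[OF assms(1)] unfolding labelled_cylinder_def by simp
next
  fix q assume "q \<in> labelled_cylinder v d (cylinder_label v d p)"
  thus "q \<in> cyl_rel v d `` {p}"
    using same_label_imp_cyl_rel[OF assms] unfolding labelled_cylinder_def by simp
qed

lemma cylinders_eq_image:
  assumes "d \<ge> 1"
  shows "cylinders v d = labelled_cylinder v d ` cylinder_label v d ` regset v d"
  unfolding cylinders_def quotient_def using cyl_rel_Image_eq[OF assms] by auto

lemma inj_on_labelled_cylinder: "inj_on (labelled_cylinder v d) (cylinder_label v d ` regset v d)"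
proof (rule inj_onI)
  fix a b assume "a \<in> cylinder_label v d ` regset v d" "labelled_cylinder v d a = labelled_cylinder v d b"
  then obtain p where "p \<in> labelled_cylinder v d a" "p \<in> labelled_cylinder v d b"
    unfolding labelled_cylinder_def by auto
  thus "a = b" unfolding labelled_cylinder_def by simp
qed

lemma cylinder_label_image:
  assumes "d \<ge> 1"
  shows "cylinder_label v d ` regset v d
           = (SIGMA k : monodromy (Re v) ` Collect (regular_abscissa (Re v)). {0..<gcd k (int d)})"
proof
  show "cylinder_label v d ` regset v d
          \<subseteq> (SIGMA k : monodromy (Re v) ` Collect (regular_abscissa (Re v)). {0..<gcd k (int d)})"
    using mem_regset_iff[OF assms] assms by (auto simp: cylinder_label_def)
next
  show "(SIGMA k : monodromy (Re v) ` Collect (regular_abscissa (Re v)). {0..<gcd k (int d)})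
          \<subseteq> cylinder_label v d ` regset v d"
  proof clarify
    fix x r assume x: "regular_abscissa (Re v) x" and r: "r \<in> {0..<gcd (monodromy (Re v) x) (int d)}"
    define p where "p = (complex_of_real x, r - shift v (of_real x) (of_real (band_midpoint (Re v) x)))"
    have "p \<in> regset v d" using x mem_regset_iff[OF assms] unfolding p_def by simp
    moreover have "cylinder_label v d p = (monodromy (Re v) x, r)"
      using r unfolding cylinder_label_def transported_sheet_def p_def by simp
    ultimately show "(monodromy (Re v) x, r) \<in> cylinder_label v d ` regset v d" by force
  qed
qed

lemma cyl_width_labelled_cylinder:
  assumes "d \<ge> 1" "lab \<in> cylinder_label v d ` regset v d"
  shows "cyl_width v d (labelled_cylinder v d lab) = real d / real_of_int (gcd (fst lab) (int d))"
proof -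
  define p where "p = (SOME p. p \<in> labelled_cylinder v d lab)"
  obtain p0 where "p0 \<in> regset v d" "lab = cylinder_label v d p0" using assms(2) by blast
  hence "p0 \<in> labelled_cylinder v d lab" unfolding labelled_cylinder_def by simp
  hence "p \<in> labelled_cylinder v d lab" unfolding p_def by (rule someI)
  hence "p \<in> regset v d" and lab: "fst lab = monodromy (Re v) (Re (fst p))"
    unfolding labelled_cylinder_def cylinder_label_def by auto
  hence "regular_abscissa (Re v) (Re (fst p))" using mem_regset_iff[OF assms(1)] by blast
  thus ?thesis
    unfolding cyl_width_def p_def[symmetric] lab by (rule vperiod_eq[OF assms(1)])
qed

lemma monodromy_image_not_Ints:
  assumes "th \<notin> \<int>"
  shows "monodromy th ` Collect (regular_abscissa th) = {\<lfloor>th\<rfloor>, \<lfloor>th\<rfloor> + 1}"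
proof
  show "monodromy th ` Collect (regular_abscissa th) \<subseteq> {\<lfloor>th\<rfloor>, \<lfloor>th\<rfloor> + 1}"
  proof (rule image_subsetI)
    fix x assume "x \<in> Collect (regular_abscissa th)"
    thus "monodromy th x \<in> {\<lfloor>th\<rfloor>, \<lfloor>th\<rfloor> + 1}"
      using monodromy_eq_frac[of th x] by (cases "frac x < frac th") simp_all
  qed
next
  define f where "f = frac th"
  have f: "0 < f" "f < 1" using assms frac_lt_1 unfolding f_def by (auto simp: order_le_less)
  define x1 x2 where "x1 = f / 2" and "x2 = (1 + f) / 2"
  have "frac x1 = x1" "frac x2 = x2" using f unfolding x1_def x2_def by (simp_all add: frac_eq)
  hence "regular_abscissa th x1" "frac x1 < frac th" "regular_abscissa th x2" "\<not> frac x2 < frac th"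
    using f unfolding regular_abscissa_iff_frac x1_def x2_def f_def[symmetric] by simp_all
  hence "monodromy th x1 = \<lfloor>th\<rfloor> + 1" "monodromy th x2 = \<lfloor>th\<rfloor>"
    "regular_abscissa th x1" "regular_abscissa th x2"
    using monodromy_eq_frac[of th x1] monodromy_eq_frac[of th x2] by simp_all
  thus "{\<lfloor>th\<rfloor>, \<lfloor>th\<rfloor> + 1} \<subseteq> monodromy th ` Collect (regular_abscissa th)"
    by (metis empty_subsetI image_eqI insert_subset mem_Collect_eq)
qed

lemma monodromy_image_Ints:
  assumes "th \<in> \<int>"
  shows "monodromy th ` Collect (regular_abscissa th) = {\<lfloor>th\<rfloor>}"
proof
  have "frac th = 0" using assms by simp
  show "monodromy th ` Collect (regular_abscissa th) \<subseteq> {\<lfloor>th\<rfloor>}"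
  proof (rule image_subsetI)
    fix x assume "x \<in> Collect (regular_abscissa th)"
    thus "monodromy th x \<in> {\<lfloor>th\<rfloor>}" using monodromy_eq_frac[of th x] \<open>frac th = 0\<close> frac_ge_0[of x] by simp
  qed
next
  have fracs: "frac th = 0" "frac (1/2 :: real) = 1/2" using assms by (simp_all add: frac_eq)
  have reg: "regular_abscissa th (1/2)" unfolding regular_abscissa_iff_frac fracs by simp
  have "monodromy th (1/2) = \<lfloor>th\<rfloor>" unfolding monodromy_eq_frac[OF reg] fracs by simp
  thus "{\<lfloor>th\<rfloor>} \<subseteq> monodromy th ` Collect (regular_abscissa th)"
    using reg by (metis empty_subsetI image_eqI insert_subset mem_Collect_eq)
qed

definition cylinders_with_monodromy :: "complex \<Rightarrow> nat \<Rightarrow> int \<Rightarrow> pt set set" where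
  "cylinders_with_monodromy v d k = labelled_cylinder v d ` ({k} \<times> {0..<gcd k (int d)})"

lemma cylinders_eq_UN_cylinders_with_monodromy:
  assumes "d \<ge> 1"
  shows "cylinders v d = (\<Union>k \<in> monodromy (Re v) ` Collect (regular_abscissa (Re v)).
                            cylinders_with_monodromy v d k)"
  unfolding cylinders_eq_image[OF assms] cylinder_label_image[OF assms] cylinders_with_monodromy_def
  by blast

lemma labels_with_monodromy_subset:
  assumes "d \<ge> 1" "k \<in> monodromy (Re v) ` Collect (regular_abscissa (Re v))"
  shows "{k} \<times> {0..<gcd k (int d)} \<subseteq> cylinder_label v d ` regset v d"
  unfolding cylinder_label_image[OF assms(1)] using assms(2) by blast

lemma card_cylinders_with_monodromy:
  assumes "d \<ge> 1" "k \<in> monodromy (Re v) ` Collect (regular_abscissa (Re v))"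
  shows "card (cylinders_with_monodromy v d k) = nat (gcd k (int d))"
proof -
  have "card (cylinders_with_monodromy v d k) = card ({k} \<times> {0..<gcd k (int d)})"
    unfolding cylinders_with_monodromy_def
    using inj_on_subset[OF inj_on_labelled_cylinder labels_with_monodromy_subset[OF assms]]
    by (rule card_image)
  thus ?thesis by (simp add: card_cartesian_product)
qed

lemma cyl_width_cylinders_with_monodromy:
  assumes "d \<ge> 1" "k \<in> monodromy (Re v) ` Collect (regular_abscissa (Re v))"
    and "C \<in> cylinders_with_monodromy v d k"
  shows "cyl_width v d C = real d / real_of_int (gcd k (int d))"
proof -
  obtain r where "r \<in> {0..<gcd k (int d)}" and C: "C = labelled_cylinder v d (k, r)"
    using assms(3) unfolding cylinders_with_monodromy_def by auto
  hence "(k, r) \<in> cylinder_label v d ` regset v d"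
    using labels_with_monodromy_subset[OF assms(1,2)] by blast
  thus ?thesis unfolding C using cyl_width_labelled_cylinder[OF assms(1)] by simp
qed

lemma cylinders_with_monodromy_disjoint:
  assumes "d \<ge> 1" "k \<in> monodromy (Re v) ` Collect (regular_abscissa (Re v))"
    "k' \<in> monodromy (Re v) ` Collect (regular_abscissa (Re v))" "k \<noteq> k'"
  shows "cylinders_with_monodromy v d k \<inter> cylinders_with_monodromy v d k' = {}"
  using inj_on_image_Int[OF inj_on_labelled_cylinder labels_with_monodromy_subset[OF assms(1,2)]
      labels_with_monodromy_subset[OF assms(1,3)]] assms(4)
  unfolding cylinders_with_monodromy_def by auto

lemma cylinders_off_boundary_leaf:
  assumes "d \<ge> 1" "Re v \<notin> \<int>"
  defines "A \<equiv> cylinders_with_monodromy v d \<lfloor>Re v\<rfloor>"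
    and "B \<equiv> cylinders_with_monodromy v d (\<lfloor>Re v\<rfloor> + 1)"
  shows "cylinders v d = A \<union> B \<and> A \<inter> B = {} \<and>
    card A = nat (gcd \<lfloor>Re v\<rfloor> (int d)) \<and> card B = nat (gcd (\<lfloor>Re v\<rfloor> + 1) (int d)) \<and>
    (\<forall>C\<in>A. cyl_width v d C = real d / real_of_int (gcd \<lfloor>Re v\<rfloor> (int d))) \<and>
    (\<forall>C\<in>B. cyl_width v d C = real d / real_of_int (gcd (\<lfloor>Re v\<rfloor> + 1) (int d)))"
proof -
  have K: "monodromy (Re v) ` Collect (regular_abscissa (Re v)) = {\<lfloor>Re v\<rfloor>, \<lfloor>Re v\<rfloor> + 1}"
    using monodromy_image_not_Ints[OF assms(2)] .
  hence k: "\<lfloor>Re v\<rfloor> \<in> monodromy (Re v) ` Collect (regular_abscissa (Re v))"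
    "\<lfloor>Re v\<rfloor> + 1 \<in> monodromy (Re v) ` Collect (regular_abscissa (Re v))" by simp_all
  show ?thesis
    using cylinders_eq_UN_cylinders_with_monodromy[OF assms(1), of v]
      cylinders_with_monodromy_disjoint[OF assms(1) k] card_cylinders_with_monodromy[OF assms(1) k(1)]
      card_cylinders_with_monodromy[OF assms(1) k(2)] cyl_width_cylinders_with_monodromy[OF assms(1) k(1)]
      cyl_width_cylinders_with_monodromy[OF assms(1) k(2)]
    unfolding A_def B_def K by simp
qed

lemma cylinders_on_boundary_leaf:
  assumes "d \<ge> 1" "Re v \<in> \<int>"
  shows "card (cylinders v d) = nat (gcd \<lfloor>Re v\<rfloor> (int d)) \<and>
    (\<forall>C\<in>cylinders v d. cyl_width v d C = real d / real_of_int (gcd \<lfloor>Re v\<rfloor> (int d)))"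
proof -
  have K: "monodromy (Re v) ` Collect (regular_abscissa (Re v)) = {\<lfloor>Re v\<rfloor>}"
    using monodromy_image_Ints[OF assms(2)] .
  hence k: "\<lfloor>Re v\<rfloor> \<in> monodromy (Re v) ` Collect (regular_abscissa (Re v))" by simp
  show ?thesis
    using cylinders_eq_UN_cylinders_with_monodromy[OF assms(1), of v]
      card_cylinders_with_monodromy[OF assms(1) k] cyl_width_cylinders_with_monodromy[OF assms(1) k]
    unfolding K by simp
qed

lemma gcd_eq_if_mod_eq:
  fixes k :: int
  assumes "k mod int d = int i mod int d"
  shows "gcd k (int d) = int (gcd i d)"
  using gcd_red_int[of k "int d"] gcd_red_int[of "int i" "int d"] assms by simp

lemma in_open_cyl_floor_gcd:
  assumes "in_open_cyl d i th" "i < d"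
  shows "th \<notin> \<int> \<and> gcd \<lfloor>th\<rfloor> (int d) = int (gcd i d) \<and>
    gcd (\<lfloor>th\<rfloor> + 1) (int d) = int (gcd (i + 1) d)"
proof -
  have floor: "\<lfloor>th\<rfloor> mod int d = int i mod int d"
    using assms unfolding in_open_cyl_def by auto
  have floor_succ: "(\<lfloor>th\<rfloor> + 1) mod int d = int (i + 1) mod int d"
    using mod_add_cong[OF floor, of 1 1] by (simp add: add.commute)
  show ?thesis
    using assms(1) gcd_eq_if_mod_eq[OF floor] gcd_eq_if_mod_eq[OF floor_succ] unfolding in_open_cyl_def
    by simp
qed

lemma on_boundary_leaf_floor_gcd:
  assumes "on_boundary_leaf d i th"
  shows "th \<in> \<int> \<and> gcd \<lfloor>th\<rfloor> (int d) = int (gcd i d)"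
proof -
  obtain k :: int where th: "th = of_int (int i + k * int d)"
    using assms unfolding on_boundary_leaf_def by auto
  have "(int i + k * int d) mod int d = int i mod int d" by simp
  hence "\<lfloor>th\<rfloor> mod int d = int i mod int d" unfolding th floor_of_int .
  thus ?thesis using gcd_eq_if_mod_eq unfolding th by simp
qed

theorem mainTheorem9:
  fixes d i :: nat and th tv :: real
  assumes "d \<ge> 2" and "i < d"
  shows "(in_open_cyl d i th \<longrightarrow>
            (\<exists>A B. cylinders (Complex th tv) d = A \<union> B \<and> A \<inter> B = {} \<and>
               card A = gcd i d \<and> card B = gcd (i + 1) d \<and>
               (\<forall>C\<in>A. cyl_width (Complex th tv) d C = real d / real (gcd i d)) \<and>
               (\<forall>C\<in>B. cyl_width (Complex th tv) d C = real d / real (gcd (i + 1) d))))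
       \<and> (on_boundary_leaf d i th \<longrightarrow>
            card (cylinders (Complex th tv) d) = gcd i d \<and>
            (\<forall>C\<in>cylinders (Complex th tv) d.
               cyl_width (Complex th tv) d C = real d / real (gcd i d)))"
proof -
  have d: "d \<ge> 1" using assms(1) by simp
  show ?thesis
  proof (rule conjI; rule impI)
    assume "in_open_cyl d i th"
    with in_open_cyl_floor_gcd[OF _ assms(2)] cylinders_off_boundary_leaf[OF d, of "Complex th tv"]
    show "\<exists>A B. cylinders (Complex th tv) d = A \<union> B \<and> A \<inter> B = {} \<and>
        card A = gcd i d \<and> card B = gcd (i + 1) d \<and>
        (\<forall>C\<in>A. cyl_width (Complex th tv) d C = real d / real (gcd i d)) \<and>
        (\<forall>C\<in>B. cyl_width (Complex th tv) d C = real d / real (gcd (i + 1) d))"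
      by (simp, blast)
  next
    assume "on_boundary_leaf d i th"
    with on_boundary_leaf_floor_gcd cylinders_on_boundary_leaf[OF d, of "Complex th tv"]
    show "card (cylinders (Complex th tv) d) = gcd i d \<and>
        (\<forall>C\<in>cylinders (Complex th tv) d. cyl_width (Complex th tv) d C = real d / real (gcd i d))"
      by simp
  qed
qed

end
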